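(* Let $X$ be an arbitrary Banach space and $A$ the generator of a $C_0$-semigroup $\mathbf T=\{T(t)\}_{t\ge0}$ on $X$. If there exists $Q\in B^{+}(X,X^{*})$ such that $\langle QAx,x\rangle+\langle Qx,Ax\rangle\le -\|x\|^{2}$ for all $x\in D(A)$, then $\mathbf T$ is uniformly exponentially stable, i.e. there exist $M\ge1$, $\varepsilon>0$ with $\|T(t)\|\le Me^{-\varepsilon t}$ for all $t\ge0$.
   Context: $X^{*}$ denotes the space of all bounded antilinear functionals on $X$, and $\langle f,x\rangle$ denotes the duality pairing of $f\in X^{*}$ with $x\in X$. $B(X,X^{*})$ is the space of bounded linear operators $X\to X^{*}$. An operator $Q\in B(X,X^{*})$ is positive if $\langle Qx,x\rangle\ge 0$ (in particular real) for all $x\in X$; $B^{+}(X,X^{*})$ is the set of positive operators in $B(X,X^{*})$. *)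

theory Defs
  imports "HOL-Analysis.Analysis" "HOL-Library.Complex_Order"
begin

class cbanach = banach +
  fixes scaleC :: "complex \<Rightarrow> 'a \<Rightarrow> 'a" (infixr "*\<^sub>C" 75)
  assumes scaleC_add_left: "(a + b) *\<^sub>C x = a *\<^sub>C x + b *\<^sub>C x"
    and scaleC_add_right: "a *\<^sub>C (x + y) = a *\<^sub>C x + a *\<^sub>C y"
    and scaleC_scaleC: "a *\<^sub>C (b *\<^sub>C x) = (a * b) *\<^sub>C x"
    and scaleC_one: "1 *\<^sub>C x = x"
    and scaleR_scaleC: "r *\<^sub>R x = complex_of_real r *\<^sub>C x"
    and norm_scaleC: "norm (a *\<^sub>C x) = cmod a * norm x"

definition C0_semigroup :: "(real \<Rightarrow> 'a::cbanach \<Rightarrow> 'a) \<Rightarrow> bool" where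
  "C0_semigroup T \<longleftrightarrow>
     (\<forall>t\<ge>0. bounded_linear (T t) \<and> (\<forall>c x. T t (c *\<^sub>C x) = c *\<^sub>C T t x)) \<and>
     T 0 = id \<and>
     (\<forall>s\<ge>0. \<forall>t\<ge>0. T (s + t) = T s \<circ> T t) \<and>
     (\<forall>x. ((\<lambda>t. T t x) \<longlongrightarrow> x) (at_right 0))"

definition is_generator :: "(real \<Rightarrow> 'a::cbanach \<Rightarrow> 'a) \<Rightarrow> 'a set \<Rightarrow> ('a \<Rightarrow> 'a) \<Rightarrow> bool" where
  "is_generator T D A \<longleftrightarrow>
     D = {x. \<exists>y. ((\<lambda>h. (1 / h) *\<^sub>R (T h x - x)) \<longlongrightarrow> y) (at_right 0)} \<and>
     (\<forall>x\<in>D. ((\<lambda>h. (1 / h) *\<^sub>R (T h x - x)) \<longlongrightarrow> A x) (at_right 0))"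

text \<open>An operator Q in B(X, X*) is encoded by its pairing: Q x y = \<langle>Q x, y\<rangle>.
  Q x is antilinear, Q is linear, and Q is bounded.\<close>
definition bounded_op_to_antidual :: "('a::cbanach \<Rightarrow> 'a \<Rightarrow> complex) \<Rightarrow> bool" where
  "bounded_op_to_antidual Q \<longleftrightarrow>
     (\<forall>x y z. Q x (y + z) = Q x y + Q x z) \<and>
     (\<forall>x y c. Q x (c *\<^sub>C y) = cnj c * Q x y) \<and>
     (\<forall>x x' y. Q (x + x') y = Q x y + Q x' y) \<and>
     (\<forall>x y c. Q (c *\<^sub>C x) y = c * Q x y) \<and>
     (\<exists>C. \<forall>x y. norm (Q x y) \<le> C * norm x * norm y)"

text \<open>Positivity (order on complex from Complex_Order: z \<ge> 0 means z real and nonnegative).\<close>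
definition positive_op :: "('a::cbanach \<Rightarrow> 'a \<Rightarrow> complex) \<Rightarrow> bool" where
  "positive_op Q \<longleftrightarrow> bounded_op_to_antidual Q \<and> (\<forall>x. Q x x \<ge> 0)"

end

theory Submission
  imports Defs
begin

text \<open>Along an orbit starting in D the energy E(t) = Re Q (T t x) (T t x) is nonnegative and,
  by the Lyapunov inequality, has right derivative at most -|T t x|^2; hence the energy dissipated
  on any time interval is at most Re Q x x \<le> C |x|^2. Together with the local bound
  |T s| \<le> K for small s, which comes from the uniform boundedness principle, this yields first a
  uniform bound |T t x|^2 \<le> B |x|^2 and then |T t0 x| \<le> |x| / 2 for t0 > 4 B C. By density of
  D this contraction holds on the whole space, and a semigroup that contracts at one positive
  time decays exponentially.\<close>

lemma le_if_right_slope_le: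
  fixes f :: "real \<Rightarrow> real"
  assumes "a \<le> b" and cont: "continuous_on {a..b} f"
    and slope: "\<And>t. t \<in> {a..<b} \<Longrightarrow> \<exists>d>0. \<forall>h. 0 < h \<and> h < d \<longrightarrow> f (t + h) \<le> f t + m * h"
  shows "f b \<le> f a + m * (b - a)"
proof (rule ccontr)
  define F where "F s = f s - f a - m * (s - a)" for s
  assume "\<not> f b \<le> f a + m * (b - a)"
  then have "F b > 0" by (simp add: F_def)
  define Z where "Z = {s \<in> {a..b}. F s \<le> 0}"
  have "continuous_on {a..b} F" unfolding F_def by (intro continuous_intros cont)
  then have "closed Z"
    unfolding Z_def using continuous_on_closed_Collect_le[OF _ continuous_on_const] by blast
  moreover have "a \<in> Z" using \<open>a \<le> b\<close> by (simp add: Z_def F_def)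
  moreover have bdd: "bdd_above Z" unfolding Z_def by (rule bdd_aboveI[of _ b]) auto
  ultimately have "Sup Z \<in> Z" using closed_contains_Sup by blast
  define s where "s = Sup Z"
  have s: "s \<in> {a..b}" "F s \<le> 0" using \<open>Sup Z \<in> Z\<close> by (auto simp: Z_def s_def)
  with \<open>F b > 0\<close> have "s < b" by (metis atLeastAtMost_iff order_le_less not_le)
  have pos_beyond: "F u > 0" if "u \<in> {s<..b}" for u
  proof (rule ccontr)
    assume "\<not> F u > 0"
    then have "u \<in> Z" using that s by (auto simp: Z_def)
    then have "u \<le> s" unfolding s_def using bdd by (rule cSup_upper)
    with that show False by auto
  qed
  obtain d where "d > 0" and d: "\<And>h. 0 < h \<Longrightarrow> h < d \<Longrightarrow> f (s + h) \<le> f s + m * h"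
    using slope[of s] s \<open>s < b\<close> by auto
  define h where "h = min (d / 2) (b - s)"
  have h: "0 < h" "h < d" "h \<le> b - s" using \<open>d > 0\<close> \<open>s < b\<close> by (auto simp: h_def)
  then have "F (s + h) \<le> F s" using d[of h] by (simp add: F_def algebra_simps)
  moreover have "F (s + h) > 0" using pos_beyond[of "s + h"] h by auto
  ultimately show False using s by linarith
qed

lemma le_if_right_derivative_le:
  fixes f f' :: "real \<Rightarrow> real"
  assumes "a \<le> b" and cont: "continuous_on {a..b} f"
    and deriv: "\<And>t. t \<in> {a..<b} \<Longrightarrow> ((\<lambda>h. (f (t + h) - f t) / h) \<longlongrightarrow> f' t) (at_right 0)"
    and bound: "\<And>t. t \<in> {a..<b} \<Longrightarrow> f' t \<le> m"
  shows "f b \<le> f a + m * (b - a)"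
proof -
  have slack: "f b \<le> f a + (m + e) * (b - a)" if "e > 0" for e
  proof (rule le_if_right_slope_le[OF \<open>a \<le> b\<close> cont])
    fix t assume t: "t \<in> {a..<b}"
    have "\<forall>\<^sub>F h in at_right 0. (f (t + h) - f t) / h < m + e"
      using order_tendstoD(2)[OF deriv[OF t]] bound[OF t] \<open>e > 0\<close> by simp
    then obtain d where "d > 0" and d: "\<And>h. 0 < h \<Longrightarrow> h < d \<Longrightarrow> (f (t + h) - f t) / h < m + e"
      by (auto simp: eventually_at_right_field)
    then show "\<exists>d>0. \<forall>h. 0 < h \<and> h < d \<longrightarrow> f (t + h) \<le> f t + (m + e) * h"
      by (auto simp: pos_divide_less_eq algebra_simps intro!: exI[of _ d] less_imp_le)
  qed
  show ?thesis
  proof (cases "a = b")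
    case False
    with \<open>a \<le> b\<close> have "b - a > 0" by simp
    show ?thesis
    proof (rule field_le_epsilon)
      fix e :: real assume "e > 0"
      have "(m + e / (b - a)) * (b - a) = m * (b - a) + e"
        using \<open>b - a > 0\<close> by (simp add: field_simps)
      with slack[of "e / (b - a)"] \<open>e > 0\<close> \<open>b - a > 0\<close> show "f b \<le> f a + m * (b - a) + e"
        by simp
    qed
  qed simp
qed

lemma norm_le_if_bounded_on_ball:
  assumes "bounded_linear L" and "r > 0" and bounded: "\<And>y. y \<in> ball x0 r \<Longrightarrow> norm (L y) \<le> c"
  shows "norm (L x) \<le> (4 * c / r) * norm x"
proof -
  have small: "norm (L y) \<le> 2 * c" if "norm y < r" for y
  proof -
    have "norm (L (x0 + y)) \<le> c" "norm (L x0) \<le> c"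
      using bounded that \<open>r > 0\<close> by (auto simp: dist_norm)
    moreover have "L y = L (x0 + y) - L x0"
      using assms(1) by (simp add: bounded_linear.linear linear_simps)
    ultimately show ?thesis
      using norm_triangle_ineq4[of "L (x0 + y)" "L x0"] by simp
  qed
  show ?thesis
  proof (cases "x = 0")
    case True
    then show ?thesis using assms(1) by (simp add: bounded_linear.linear linear_simps)
  next
    case False
    define s where "s = r / (2 * norm x)"
    have "s > 0" "norm (s *\<^sub>R x) < r" using \<open>r > 0\<close> False by (simp_all add: s_def)
    then have "s * norm (L x) \<le> 2 * c"
      using small[of "s *\<^sub>R x"] assms(1) by (simp add: bounded_linear.linear linear_simps)
    then show ?thesis using \<open>s > 0\<close> \<open>r > 0\<close> False by (simp add: s_def field_simps)
  qed
qed

theorem uniform_boundedness: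
  fixes S :: "'i \<Rightarrow> 'a::banach \<Rightarrow> 'b::real_normed_vector"
  assumes lin: "\<And>i. bounded_linear (S i)"
    and pointwise: "\<And>x. \<exists>B. \<forall>i. norm (S i x) \<le> B"
  shows "\<exists>K. \<forall>i x. norm (S i x) \<le> K * norm x"
proof -
  define F where "F n = {x. \<forall>i. norm (S i x) \<le> real n}" for n :: nat
  have closed: "closed (F n)" for n
  proof -
    have "continuous_on UNIV (S i)" for i
      using lin by (simp add: linear_continuous_on)
    then have "closed {x. norm (S i x) \<le> real n}" for i
      by (intro closed_Collect_le continuous_intros) auto
    moreover have "F n = (\<Inter>i. {x. norm (S i x) \<le> real n})" by (auto simp: F_def)
    ultimately show ?thesis by auto
  qed
  have cover: "(\<Union>n. F n) = UNIV"
  proof (intro set_eqI iffI)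
    fix x
    obtain B where B: "\<forall>i. norm (S i x) \<le> B" using pointwise by blast
    obtain n :: nat where "B \<le> real n" using real_arch_simple by blast
    with B have "x \<in> F n" by (auto simp: F_def intro: order_trans)
    then show "x \<in> (\<Union>n. F n)" by blast
  qed simp
  have "\<exists>n. interior (F n) \<noteq> {}"
  proof (rule ccontr)
    assume "\<not> (\<exists>n. interior (F n) \<noteq> {})"
    then have "euclidean interior_of (\<Union>(range F)) = {}"
      by (intro Baire_category_alt) (auto simp: completely_metrizable_space_euclidean closed)
    with cover show False by simp
  qed
  then obtain n x0 r where "r > 0" and ball: "ball x0 r \<subseteq> F n"
    by (metis all_not_in_conv interiorE open_contains_ball_eq subset_trans)
  have "norm (S i x) \<le> (4 * real n / r) * norm x" for i x
  proof (rule norm_le_if_bounded_on_ball[OF lin \<open>r > 0\<close>])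
    show "norm (S i y) \<le> real n" if "y \<in> ball x0 r" for y
      using ball that by (auto simp: F_def)
  qed
  then show ?thesis by blast
qed

lemma has_vector_derivative_imp_tendsto_quotient:
  fixes f :: "real \<Rightarrow> 'a::real_normed_vector"
  assumes "(f has_vector_derivative f') (at x within S)"
  shows "((\<lambda>y. (1 / (y - x)) *\<^sub>R (f y - f x)) \<longlongrightarrow> f') (at x within S)"
proof -
  have "((\<lambda>y. ((f y - f x) - (y - x) *\<^sub>R f') /\<^sub>R norm (y - x)) \<longlongrightarrow> 0) (at x within S)"
    using assms by (simp add: has_vector_derivative_def has_derivative_at_within)
  then have "((\<lambda>y. norm (((f y - f x) - (y - x) *\<^sub>R f') /\<^sub>R norm (y - x))) \<longlongrightarrow> 0) (at x within S)"
    by (rule tendsto_norm_zero)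
  moreover have "\<forall>\<^sub>F y in at x within S. norm (((f y - f x) - (y - x) *\<^sub>R f') /\<^sub>R norm (y - x))
      = norm ((1 / (y - x)) *\<^sub>R (f y - f x) - f')"
    unfolding eventually_at_filter
  proof (intro always_eventually allI impI)
    fix y assume "y \<noteq> x"
    have "(1 / (y - x)) *\<^sub>R (f y - f x) - f' = (1 / (y - x)) *\<^sub>R ((f y - f x) - (y - x) *\<^sub>R f')"
      using \<open>y \<noteq> x\<close> by (simp add: scaleR_diff_right)
    then show "norm (((f y - f x) - (y - x) *\<^sub>R f') /\<^sub>R norm (y - x))
      = norm ((1 / (y - x)) *\<^sub>R (f y - f x) - f')" by (simp add: divide_simps)
  qed
  ultimately have "((\<lambda>y. norm ((1 / (y - x)) *\<^sub>R (f y - f x) - f')) \<longlongrightarrow> 0) (at x within S)"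
    using tendsto_cong by fastforce
  then show ?thesis by (simp add: tendsto_norm_zero_iff LIM_zero_iff)
qed

lemma has_vector_derivative_imp_right_quotient:
  fixes f :: "real \<Rightarrow> 'a::real_normed_vector"
  assumes "(f has_vector_derivative f') (at x within {x..b})" and "x < b"
  shows "((\<lambda>h. (1 / h) *\<^sub>R (f (x + h) - f x)) \<longlongrightarrow> f') (at_right 0)"
proof -
  have "((\<lambda>y. (1 / (y - x)) *\<^sub>R (f y - f x)) \<longlongrightarrow> f') (at_right x)"
    using has_vector_derivative_imp_tendsto_quotient[OF assms(1)] \<open>x < b\<close>
    by (simp add: at_within_Icc_at_right)
  then show ?thesis
    by (subst (asm) at_right_to_0) (simp add: filterlim_filtermap add.commute)
qed

locale c0_semigroup =
  fixes T :: "real \<Rightarrow> 'a::cbanach \<Rightarrow> 'a"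
  assumes C0_semigroup: "C0_semigroup T"
begin

lemma bounded_linear_T: "t \<ge> 0 \<Longrightarrow> bounded_linear (T t)"
  using C0_semigroup by (simp add: C0_semigroup_def)

lemma T_0 [simp]: "T 0 x = x"
  using C0_semigroup by (simp add: C0_semigroup_def)

lemma T_add: "s \<ge> 0 \<Longrightarrow> t \<ge> 0 \<Longrightarrow> T (s + t) x = T s (T t x)"
  using C0_semigroup by (simp add: C0_semigroup_def)

lemma T_commute: "s \<ge> 0 \<Longrightarrow> t \<ge> 0 \<Longrightarrow> T s (T t x) = T t (T s x)"
  by (metis T_add add.commute)

lemma tendsto_T_at_right: "((\<lambda>t. T t x) \<longlongrightarrow> x) (at_right 0)"
  using C0_semigroup by (simp add: C0_semigroup_def)

lemma T_diff: "t \<ge> 0 \<Longrightarrow> T t (x - y) = T t x - T t y"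
  using bounded_linear_T by (simp add: bounded_linear.linear linear_simps)

lemma T_scaleR: "t \<ge> 0 \<Longrightarrow> T t (c *\<^sub>R x) = c *\<^sub>R T t x"
  using bounded_linear_T by (simp add: bounded_linear.linear linear_simps)

lemma uniformly_bounded_near_0: "\<exists>d>0. \<exists>K\<ge>1. \<forall>t\<in>{0..d}. \<forall>x. norm (T t x) \<le> K * norm x"
proof (rule ccontr)
  assume unbounded: "\<not> ?thesis"
  have "\<exists>t y. t \<in> {0..1 / (real n + 1)} \<and> (real n + 1) * norm y < norm (T t y)" for n
  proof -
    have "1 / (real n + 1) > 0" "real n + 1 \<ge> 1" by auto
    with unbounded show ?thesis by (meson not_le)
  qed
  then obtain t y where t: "\<And>n. t n \<in> {0..1 / (real n + 1)}"
    and y: "\<And>n. (real n + 1) * norm (y n) < norm (T (t n) (y n))"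
    by metis
  have "t \<longlonglongrightarrow> 0"
  proof (rule real_tendsto_sandwich)
    show "\<forall>\<^sub>F n in sequentially. 0 \<le> t n" "\<forall>\<^sub>F n in sequentially. t n \<le> inverse (real (Suc n))"
      using t by (auto simp: field_simps)
  qed (rule tendsto_const LIMSEQ_inverse_real_of_nat)+
  have "\<exists>B. \<forall>n. norm (T (t n) x) \<le> B" for x
  proof -
    have "continuous (at 0 within {0..1}) (\<lambda>s. T s x)"
      using tendsto_T_at_right[of x] by (simp add: continuous_within at_within_Icc_at_right)
    moreover have "t n \<in> {0..1}" for n
    proof -
      have "1 / (real n + 1) \<le> 1" by simp
      with t[of n] show ?thesis unfolding atLeastAtMost_iff by linarith
    qed
    ultimately have "(\<lambda>n. T (t n) x) \<longlonglongrightarrow> x"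
      using \<open>t \<longlonglongrightarrow> 0\<close> by (auto simp: continuous_within_sequentially o_def)
    then show ?thesis by (meson Bseq_def convergentI convergent_imp_Bseq)
  qed
  then obtain K where K: "\<And>n x. norm (T (t n) x) \<le> K * norm x"
    using uniform_boundedness[of "\<lambda>n. T (t n)"] bounded_linear_T t by fastforce
  obtain n :: nat where "K \<le> real n" using real_arch_simple by blast
  then have "norm (T (t n) (y n)) \<le> real n * norm (y n)"
    using K[of n "y n"] by (meson mult_right_mono norm_ge_zero order_trans)
  with y[of n] norm_ge_zero[of "y n"] show False by (simp add: algebra_simps)
qed

lemma uniformly_bounded_on_Icc: "\<exists>K\<ge>1. \<forall>s\<in>{0..t}. \<forall>x. norm (T s x) \<le> K * norm x"
proof -
  obtain d K where "d > 0" "K \<ge> 1" and K: "\<forall>s\<in>{0..d}. \<forall>x. norm (T s x) \<le> K * norm x"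
    using uniformly_bounded_near_0 by blast
  have "\<forall>s\<in>{0..real n * d}. \<forall>x. norm (T s x) \<le> K ^ n * norm x" for n
  proof (induction n)
    case (Suc n)
    show ?case
    proof (intro ballI allI)
      fix s x assume s: "s \<in> {0..real (Suc n) * d}"
      show "norm (T s x) \<le> K ^ Suc n * norm x"
      proof (cases "s \<le> d")
        case True
        then have "norm (T s x) \<le> K * norm x" using K s by auto
        also have "\<dots> \<le> K ^ Suc n * norm x"
          using \<open>K \<ge> 1\<close> by (intro mult_right_mono) (auto simp: power_increasing[of 1 "Suc n" K, simplified])
        finally show ?thesis .
      next
        case False
        then have "s - d \<in> {0..real n * d}" using s by (auto simp: algebra_simps)
        have "T s x = T d (T (s - d) x)" using T_add[of d "s - d" x] False \<open>d > 0\<close> by simp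
        then have "norm (T s x) \<le> K * norm (T (s - d) x)" using K \<open>d > 0\<close> by simp
        also have "\<dots> \<le> K * (K ^ n * norm x)"
          using Suc.IH \<open>s - d \<in> _\<close> \<open>K \<ge> 1\<close> by (intro mult_left_mono) auto
        finally show ?thesis by simp
      qed
    qed
  qed simp
  moreover obtain n :: nat where "t / d \<le> real n" using real_arch_simple by blast
  then have "t \<le> real n * d" using \<open>d > 0\<close> by (simp add: field_simps)
  ultimately show ?thesis using \<open>K \<ge> 1\<close>
    by (intro exI[of _ "K ^ n"]) (auto simp: one_le_power)
qed

lemma T_close_to_identity:
  assumes "e > 0"
  shows "\<exists>b>0. \<forall>h\<in>{0..<b}. norm (T h x - x) < e"
proof -
  have "\<forall>\<^sub>F h in at_right 0. dist (T h x) x < e"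
    using tendsto_T_at_right[of x] assms by (simp add: tendsto_iff)
  then obtain b where "b > 0" and b: "\<And>h. 0 < h \<Longrightarrow> h < b \<Longrightarrow> dist (T h x) x < e"
    by (auto simp: eventually_at_right_field)
  have "norm (T h x - x) < e" if "h \<in> {0..<b}" for h
    using that b[of h] assms by (cases "h = 0") (auto simp: dist_norm)
  with \<open>b > 0\<close> show ?thesis by blast
qed

lemma continuous_on_orbit: "continuous_on {0..} (\<lambda>t. T t x)"
  unfolding continuous_on_iff
proof (intro ballI allI impI)
  fix t e :: real assume "t \<in> {0..}" "e > 0"
  obtain K where "K \<ge> 1" and K: "\<forall>s\<in>{0..t}. \<forall>y. norm (T s y) \<le> K * norm y"
    using uniformly_bounded_on_Icc by blast
  obtain b where "b > 0" and b: "\<forall>h\<in>{0..<b}. norm (T h x - x) < e / K"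
    using T_close_to_identity[of "e / K" x] \<open>e > 0\<close> \<open>K \<ge> 1\<close> by auto
  have close: "dist (T v x) (T u x) < e" if "0 \<le> u" "u \<le> t" "u \<le> v" "v - u < b" for u v
  proof -
    have "T v x - T u x = T u (T (v - u) x - x)"
      using T_add[of u "v - u" x] that by (simp add: T_diff)
    then have "dist (T v x) (T u x) \<le> K * norm (T (v - u) x - x)"
      using K that by (simp add: dist_norm)
    also have "\<dots> < e" using b that \<open>K \<ge> 1\<close> by (simp add: field_simps)
    finally show ?thesis .
  qed
  show "\<exists>d>0. \<forall>s\<in>{0..}. dist s t < d \<longrightarrow> dist (T s x) (T t x) < e"
  proof (intro exI[of _ b] conjI ballI impI)
    fix s :: real assume "s \<in> {0..}" "dist s t < b"
    then show "dist (T s x) (T t x) < e"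
      using close[of t s] close[of s t] \<open>t \<in> {0..}\<close>
      by (cases "t \<le> s") (auto simp: dist_real_def dist_commute)
  qed (use \<open>b > 0\<close> in auto)
qed

lemma exponentially_stable_if_contraction:
  assumes "t0 > 0" and "0 < q" "q < 1" and contraction: "\<And>x. norm (T t0 x) \<le> q * norm x"
  shows "\<exists>M\<ge>1. \<exists>\<epsilon>>0. \<forall>t\<ge>0. onorm (T t) \<le> M * exp (- \<epsilon> * t)"
proof -
  obtain K where "K \<ge> 1" and K: "\<forall>s\<in>{0..t0}. \<forall>x. norm (T s x) \<le> K * norm x"
    using uniformly_bounded_on_Icc by blast
  have periodic: "\<forall>s\<in>{real n * t0..real (Suc n) * t0}. \<forall>x. norm (T s x) \<le> K * q ^ n * norm x" for n
  proof (induction n)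
    case (Suc n)
    show ?case
    proof (intro ballI allI)
      fix s x assume s: "s \<in> {real (Suc n) * t0..real (Suc (Suc n)) * t0}"
      then have "s - t0 \<in> {real n * t0..real (Suc n) * t0}" by (auto simp: algebra_simps)
      moreover have "t0 \<le> real (Suc n) * t0" using \<open>t0 > 0\<close> by simp
      then have "s - t0 \<ge> 0" using s by simp
      ultimately have "norm (T s x) \<le> K * q ^ n * norm (T t0 x)"
        using Suc.IH T_add[of "s - t0" t0 x] \<open>t0 > 0\<close> by simp
      also have "\<dots> \<le> K * q ^ n * (q * norm x)"
        using contraction \<open>K \<ge> 1\<close> \<open>q > 0\<close> by (intro mult_left_mono) auto
      finally show "norm (T s x) \<le> K * q ^ Suc n * norm x" by (simp add: ac_simps)
    qed
  qed (use K in simp)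
  define \<epsilon> where "\<epsilon> = - ln q / t0"
  have "ln q < 0" using \<open>q > 0\<close> \<open>q < 1\<close> by simp
  then have "\<epsilon> > 0" using \<open>t0 > 0\<close> by (simp add: \<epsilon>_def divide_neg_pos)
  have "onorm (T t) \<le> (K / q) * exp (- \<epsilon> * t)" if "t \<ge> 0" for t
  proof (rule onorm_bound)
    show "0 \<le> K / q * exp (- \<epsilon> * t)" using \<open>K \<ge> 1\<close> \<open>q > 0\<close> by simp
    define n where "n = nat \<lfloor>t / t0\<rfloor>"
    have "real n \<le> t / t0" "t / t0 < real n + 1"
      using that \<open>t0 > 0\<close> by (simp_all add: n_def)
    then have n: "real n * t0 \<le> t" "t < real (Suc n) * t0"
      using \<open>t0 > 0\<close> by (simp_all add: field_simps)
    have "q * q ^ n = exp (ln q) ^ Suc n" using \<open>q > 0\<close> by simp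
    also have "\<dots> = exp (real (Suc n) * ln q)" by (rule exp_of_nat_mult[symmetric])
    also have "\<dots> \<le> exp (- \<epsilon> * t)"
    proof -
      have "real (Suc n) * t0 * ln q \<le> t * ln q"
        using n \<open>ln q < 0\<close> by (intro mult_right_mono_neg) auto
      then show ?thesis using \<open>t0 > 0\<close> by (simp add: \<epsilon>_def field_simps)
    qed
    finally have "q ^ n \<le> exp (- \<epsilon> * t) / q" using \<open>q > 0\<close> by (simp add: field_simps)
    fix x
    have "norm (T t x) \<le> K * q ^ n * norm x" using periodic[of n] n by auto
    also have "\<dots> \<le> K * (exp (- \<epsilon> * t) / q) * norm x"
      using \<open>q ^ n \<le> _\<close> \<open>K \<ge> 1\<close> by (intro mult_right_mono mult_left_mono) auto
    finally show "norm (T t x) \<le> K / q * exp (- \<epsilon> * t) * norm x" by simp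
  qed
  moreover have "K / q \<ge> 1" using \<open>K \<ge> 1\<close> assms by (simp add: field_simps)
  ultimately show ?thesis using \<open>\<epsilon> > 0\<close> by blast
qed

end


locale c0_generator = c0_semigroup +
  fixes D :: "'a::cbanach set" and A :: "'a \<Rightarrow> 'a"
  assumes generator: "is_generator T D A"
begin

lemma domain_iff: "x \<in> D \<longleftrightarrow> (\<exists>y. ((\<lambda>h. (1 / h) *\<^sub>R (T h x - x)) \<longlongrightarrow> y) (at_right 0))"
  using generator by (simp add: is_generator_def)

lemma tendsto_generator: "x \<in> D \<Longrightarrow> ((\<lambda>h. (1 / h) *\<^sub>R (T h x - x)) \<longlongrightarrow> A x) (at_right 0)"
  using generator by (simp add: is_generator_def)

lemma T_maps_domain:
  assumes "x \<in> D" and "t \<ge> 0"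
  shows "T t x \<in> D"
proof -
  have ev: "\<forall>\<^sub>F h in at_right 0. T t ((1 / h) *\<^sub>R (T h x - x)) = (1 / h) *\<^sub>R (T h (T t x) - T t x)"
    by (intro eventually_mono[OF eventually_at_right_less]) (simp add: T_scaleR T_diff T_commute \<open>t \<ge> 0\<close>)
  have "((\<lambda>h. T t ((1 / h) *\<^sub>R (T h x - x))) \<longlongrightarrow> T t (A x)) (at_right 0)"
    by (rule bounded_linear.tendsto[OF bounded_linear_T[OF \<open>t \<ge> 0\<close>] tendsto_generator[OF \<open>x \<in> D\<close>]])
  then have "((\<lambda>h. (1 / h) *\<^sub>R (T h (T t x) - T t x)) \<longlongrightarrow> T t (A x)) (at_right 0)"
    using tendsto_cong[OF ev] by simp
  then show ?thesis unfolding domain_iff by blast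
qed

lemma domain_scaleR:
  assumes "x \<in> D"
  shows "c *\<^sub>R x \<in> D"
proof -
  have ev: "\<forall>\<^sub>F h in at_right 0. c *\<^sub>R ((1 / h) *\<^sub>R (T h x - x)) = (1 / h) *\<^sub>R (T h (c *\<^sub>R x) - c *\<^sub>R x)"
    by (intro eventually_mono[OF eventually_at_right_less]) (simp add: T_scaleR algebra_simps)
  have "((\<lambda>h. c *\<^sub>R ((1 / h) *\<^sub>R (T h x - x))) \<longlongrightarrow> c *\<^sub>R A x) (at_right 0)"
    by (intro tendsto_scaleR tendsto_const tendsto_generator assms)
  then have "((\<lambda>h. (1 / h) *\<^sub>R (T h (c *\<^sub>R x) - c *\<^sub>R x)) \<longlongrightarrow> c *\<^sub>R A x) (at_right 0)"
    using tendsto_cong[OF ev] by simp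
  then show ?thesis unfolding domain_iff by blast
qed

lemma has_vector_derivative_orbit_integral:
  assumes "0 \<le> s" "s \<le> b"
  shows "((\<lambda>r. integral {0..r} (\<lambda>u. T u x)) has_vector_derivative T s x) (at s within {0..b})"
proof -
  have "continuous_on {0..b} (\<lambda>u. T u x)"
    using continuous_on_orbit by (rule continuous_on_subset) auto
  then show ?thesis using integral_has_vector_derivative[of 0 b "\<lambda>u. T u x" s] assms by simp
qed

lemma tendsto_orbit_mean: "((\<lambda>h. (1 / h) *\<^sub>R integral {0..h} (\<lambda>u. T u x)) \<longlongrightarrow> x) (at_right 0)"
  using has_vector_derivative_imp_right_quotient[OF has_vector_derivative_orbit_integral[of 0 1 x]]
  by simp

lemma orbit_integral_in_domain:
  assumes "s > 0"
  shows "integral {0..s} (\<lambda>u. T u x) \<in> D"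
proof -
  define V where "V r = integral {0..r} (\<lambda>u. T u x)" for r
  have integrable: "(\<lambda>u. T u x) integrable_on {a..b}" if "a \<ge> 0" for a b
    by (intro integrable_continuous_real continuous_on_subset[OF continuous_on_orbit]) (use that in auto)
  have shift: "T h (V s) - V s = (V (s + h) - V s) - V h" if "h > 0" for h
  proof -
    have "T h (V s) = integral {0..s} (T h \<circ> (\<lambda>u. T u x))"
      unfolding V_def by (rule integral_linear[symmetric]) (use integrable bounded_linear_T that in auto)
    also have "\<dots> = integral {0..s} (\<lambda>u. T (h + u) x)"
      using that by (intro integral_cong) (simp add: T_add)
    also have "\<dots> = integral {h..s + h} (\<lambda>u. T u x)"
      using integral_shift_Icc_real[where f="\<lambda>u. T u x" and c=h and a=0 and b=s] by (simp add: add.commute o_def)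
    also have "\<dots> = V (s + h) - V h"
    proof -
      have "V h + integral {h..s + h} (\<lambda>u. T u x) = V (s + h)"
        unfolding V_def using that \<open>s > 0\<close>
        by (intro Henstock_Kurzweil_Integration.integral_combine integrable) auto
      then show ?thesis by (simp add: algebra_simps)
    qed
    finally show ?thesis by simp
  qed
  have "((\<lambda>h. (1 / h) *\<^sub>R (V (s + h) - V s) - (1 / h) *\<^sub>R V h) \<longlongrightarrow> T s x - x) (at_right 0)"
  proof (intro tendsto_diff)
    have "(V has_vector_derivative T s x) (at s within {s..s + 1})"
      unfolding V_def using \<open>s > 0\<close>
      by (intro has_vector_derivative_within_subset[OF has_vector_derivative_orbit_integral[of s "s + 1"]]) auto
    then show "((\<lambda>h. (1 / h) *\<^sub>R (V (s + h) - V s)) \<longlongrightarrow> T s x) (at_right 0)"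
      by (rule has_vector_derivative_imp_right_quotient) simp
    show "((\<lambda>h. (1 / h) *\<^sub>R V h) \<longlongrightarrow> x) (at_right 0)"
      unfolding V_def by (rule tendsto_orbit_mean)
  qed
  moreover have ev: "\<forall>\<^sub>F h in at_right 0.
      (1 / h) *\<^sub>R (V (s + h) - V s) - (1 / h) *\<^sub>R V h = (1 / h) *\<^sub>R (T h (V s) - V s)"
    by (intro eventually_mono[OF eventually_at_right_less]) (simp add: shift scaleR_diff_right)
  ultimately have "((\<lambda>h. (1 / h) *\<^sub>R (T h (V s) - V s)) \<longlongrightarrow> T s x - x) (at_right 0)"
    using tendsto_cong[OF ev] by simp
  then show ?thesis unfolding domain_iff V_def by blast
qed

lemma closure_domain: "closure D = UNIV"
proof -
  have "x \<in> closure D" for x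
  proof (rule Lim_in_closed_set[OF closed_closure _ _ tendsto_orbit_mean])
    show "\<forall>\<^sub>F h in at_right 0. (1 / h) *\<^sub>R integral {0..h} (\<lambda>u. T u x) \<in> closure D"
      by (intro eventually_mono[OF eventually_at_right_less] closure_subset[THEN subsetD]
          domain_scaleR orbit_integral_in_domain)
  qed simp
  then show ?thesis by blast
qed

end

lemma bounded_bilinear_if_bounded_op_to_antidual:
  fixes Q :: "'a::cbanach \<Rightarrow> 'a \<Rightarrow> complex"
  assumes "bounded_op_to_antidual Q"
  shows "bounded_bilinear Q"
proof
  fix a a' b b' :: 'a and r :: real
  show "Q (a + a') b = Q a b + Q a' b" "Q a (b + b') = Q a b + Q a b'"
    using assms by (simp_all add: bounded_op_to_antidual_def)
  show "Q (r *\<^sub>R a) b = r *\<^sub>R Q a b" "Q a (r *\<^sub>R b) = r *\<^sub>R Q a b"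
    using assms by (simp_all add: bounded_op_to_antidual_def scaleR_scaleC scaleR_conv_of_real)
  obtain C where "\<forall>x y. norm (Q x y) \<le> C * norm x * norm y"
    using assms by (auto simp: bounded_op_to_antidual_def)
  then show "\<exists>K. \<forall>a b. norm (Q a b) \<le> norm a * norm b * K"
    by (metis mult.commute mult.left_commute)
qed

locale lyapunov_stable = c0_generator +
  fixes Q :: "'a::cbanach \<Rightarrow> 'a \<Rightarrow> complex"
  assumes positive: "positive_op Q"
    and lyapunov: "\<forall>x\<in>D. Q (A x) x + Q x (A x) \<le> - complex_of_real ((norm x)\<^sup>2)"
begin

lemma bounded_bilinear_Q: "bounded_bilinear Q"
  using positive by (simp add: positive_op_def bounded_bilinear_if_bounded_op_to_antidual)

lemma Re_Q_diagonal_bound: "\<exists>C\<ge>0. \<forall>x. Re (Q x x) \<le> C * (norm x)\<^sup>2"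
proof -
  obtain C where "C \<ge> 0" and C: "\<forall>x y. norm (Q x y) \<le> norm x * norm y * C"
    using bounded_bilinear.nonneg_bounded[OF bounded_bilinear_Q] by blast
  have "Re (Q x x) \<le> C * (norm x)\<^sup>2" for x
    using order_trans[OF complex_Re_le_cmod C[rule_format, of x x]]
    by (simp add: power2_eq_square ac_simps)
  with \<open>C \<ge> 0\<close> show ?thesis by blast
qed

definition energy :: "'a \<Rightarrow> real \<Rightarrow> real" where
  "energy x t = Re (Q (T t x) (T t x))"

lemma energy_nonneg: "energy x t \<ge> 0"
  using positive by (simp add: energy_def positive_op_def less_eq_complex_def)

lemma continuous_on_energy: "continuous_on {0..} (energy x)"
  unfolding energy_def
  by (intro continuous_on_Re bounded_bilinear.continuous_on[OF bounded_bilinear_Q] continuous_on_orbit)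

lemma energy_right_derivative:
  assumes "x \<in> D" and "t \<ge> 0"
  defines "y \<equiv> T t x"
  shows "((\<lambda>h. (energy x (t + h) - energy x t) / h) \<longlongrightarrow> Re (Q (A y) y + Q y (A y))) (at_right 0)"
proof -
  have "y \<in> D" using T_maps_domain assms(1,2) by (simp add: y_def)
  have "((\<lambda>h. Q ((1 / h) *\<^sub>R (T h y - y)) (T h y) + Q y ((1 / h) *\<^sub>R (T h y - y)))
      \<longlongrightarrow> Q (A y) y + Q y (A y)) (at_right 0)"
    by (intro tendsto_add bounded_bilinear.tendsto[OF bounded_bilinear_Q] tendsto_generator
        \<open>y \<in> D\<close> tendsto_T_at_right tendsto_const)
  then have "((\<lambda>h. Re (Q ((1 / h) *\<^sub>R (T h y - y)) (T h y) + Q y ((1 / h) *\<^sub>R (T h y - y))))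
      \<longlongrightarrow> Re (Q (A y) y + Q y (A y))) (at_right 0)"
    by (rule tendsto_Re)
  moreover have "\<forall>\<^sub>F h in at_right 0.
      Re (Q ((1 / h) *\<^sub>R (T h y - y)) (T h y) + Q y ((1 / h) *\<^sub>R (T h y - y)))
      = (energy x (t + h) - energy x t) / h"
  proof (rule eventually_mono[OF eventually_at_right_less])
    fix h :: real assume "h > 0"
    have "T (t + h) x = T h y"
      using T_add[of h t x] \<open>t \<ge> 0\<close> \<open>h > 0\<close> by (simp add: y_def add.commute)
    moreover have "Q ((1 / h) *\<^sub>R (T h y - y)) (T h y) + Q y ((1 / h) *\<^sub>R (T h y - y))
        = (1 / h) *\<^sub>R (Q (T h y) (T h y) - Q y y)"
      using bounded_bilinear_Q
      by (simp add: bounded_bilinear.scaleR_left bounded_bilinear.scaleR_right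
          bounded_bilinear.diff_left bounded_bilinear.diff_right algebra_simps)
    ultimately show "Re (Q ((1 / h) *\<^sub>R (T h y - y)) (T h y) + Q y ((1 / h) *\<^sub>R (T h y - y)))
        = (energy x (t + h) - energy x t) / h"
      by (simp add: energy_def y_def[symmetric] divide_simps)
  qed
  ultimately show ?thesis using tendsto_cong by fastforce
qed

lemma energy_decrease:
  assumes "x \<in> D" and "0 \<le> a" "a \<le> b" and c: "\<And>s. s \<in> {a..<b} \<Longrightarrow> c \<le> (norm (T s x))\<^sup>2"
  shows "energy x b \<le> energy x a - c * (b - a)"
proof -
  have "energy x b \<le> energy x a + (- c) * (b - a)"
  proof (rule le_if_right_derivative_le[OF \<open>a \<le> b\<close>])
    show "continuous_on {a..b} (energy x)"
      using continuous_on_energy by (rule continuous_on_subset) (use \<open>0 \<le> a\<close> in auto)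
    fix s assume s: "s \<in> {a..<b}"
    then show "((\<lambda>h. (energy x (s + h) - energy x s) / h) \<longlongrightarrow>
        Re (Q (A (T s x)) (T s x) + Q (T s x) (A (T s x)))) (at_right 0)"
      using energy_right_derivative \<open>x \<in> D\<close> \<open>0 \<le> a\<close> by simp
    have "T s x \<in> D" using T_maps_domain \<open>x \<in> D\<close> s \<open>0 \<le> a\<close> by simp
    then have "Re (Q (A (T s x)) (T s x) + Q (T s x) (A (T s x))) \<le> - (norm (T s x))\<^sup>2"
      using lyapunov by (auto simp: less_eq_complex_def)
    also have "\<dots> \<le> - c" using c[OF s] by simp
    finally show "Re (Q (A (T s x)) (T s x) + Q (T s x) (A (T s x))) \<le> - c" .
  qed
  then show ?thesis by simp
qed

lemma energy_dissipation_bound: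
  assumes "x \<in> D" and "0 \<le> a" "a \<le> b" and "\<And>s. s \<in> {a..<b} \<Longrightarrow> c \<le> (norm (T s x))\<^sup>2"
  shows "c * (b - a) \<le> Re (Q x x)"
proof -
  have "energy x b \<le> energy x a - c * (b - a)"
    using assms by (rule energy_decrease)
  moreover have "energy x a \<le> energy x 0 - 0 * (a - 0)"
    using \<open>x \<in> D\<close> \<open>0 \<le> a\<close> by (intro energy_decrease) auto
  ultimately show ?thesis
    using energy_nonneg[of x b] by (simp add: energy_def)
qed

lemma uniformly_bounded_on_domain: "\<exists>B>0. \<forall>x\<in>D. \<forall>t\<ge>0. (norm (T t x))\<^sup>2 \<le> B * (norm x)\<^sup>2"
proof -
  obtain d K where "d > 0" "K \<ge> 1" and K: "\<forall>t\<in>{0..d}. \<forall>x. norm (T t x) \<le> K * norm x"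
    using uniformly_bounded_near_0 by blast
  obtain C where "C \<ge> 0" and C: "\<forall>x. Re (Q x x) \<le> C * (norm x)\<^sup>2"
    using Re_Q_diagonal_bound by blast
  define B where "B = K\<^sup>2 * (1 + C / d)"
  have "(norm (T t x))\<^sup>2 \<le> B * (norm x)\<^sup>2" if "x \<in> D" "t \<ge> 0" for x t
  proof (cases "t \<le> d")
    case True
    then have "(norm (T t x))\<^sup>2 \<le> (K * norm x)\<^sup>2"
      using K \<open>t \<ge> 0\<close> by (intro power_mono) auto
    also have "\<dots> \<le> B * (norm x)\<^sup>2"
      using \<open>d > 0\<close> \<open>C \<ge> 0\<close> by (simp add: B_def power_mult_distrib field_simps)
    finally show ?thesis .
  next
    case False
    \<comment> \<open>The energy dissipated on [t - d, t] is at least d |T t x|^2 / K^2.\<close>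
    have "(norm (T t x))\<^sup>2 / K\<^sup>2 \<le> (norm (T s x))\<^sup>2" if "s \<in> {t - d..<t}" for s
    proof -
      have "T t x = T (t - s) (T s x)" using T_add[of "t - s" s x] that False by simp
      then have "norm (T t x) \<le> K * norm (T s x)" using K that by simp
      then have "(norm (T t x))\<^sup>2 \<le> K\<^sup>2 * (norm (T s x))\<^sup>2"
        by (metis norm_ge_zero power_mono power_mult_distrib)
      then show ?thesis using \<open>K \<ge> 1\<close> by (simp add: field_simps)
    qed
    then have "(norm (T t x))\<^sup>2 / K\<^sup>2 * (t - (t - d)) \<le> Re (Q x x)"
      using False \<open>x \<in> D\<close> \<open>d > 0\<close> by (intro energy_dissipation_bound) auto
    then have "(norm (T t x))\<^sup>2 * d \<le> K\<^sup>2 * Re (Q x x)"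
      using \<open>K \<ge> 1\<close> by (simp add: field_simps)
    also have "\<dots> \<le> K\<^sup>2 * (C * (norm x)\<^sup>2)"
      using C by (intro mult_left_mono) auto
    finally have "(norm (T t x))\<^sup>2 \<le> K\<^sup>2 * C / d * (norm x)\<^sup>2"
      using \<open>d > 0\<close> by (simp add: field_simps)
    also have "\<dots> \<le> B * (norm x)\<^sup>2"
      using \<open>d > 0\<close> by (intro mult_right_mono) (simp_all add: B_def field_simps)
    finally show ?thesis .
  qed
  moreover have "B > 0" using \<open>K \<ge> 1\<close> \<open>d > 0\<close> \<open>C \<ge> 0\<close> by (simp add: B_def add_pos_nonneg)
  ultimately show ?thesis by blast
qed

lemma contraction_on_domain: "\<exists>t0>0. \<forall>x\<in>D. norm (T t0 x) \<le> norm x / 2"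
proof -
  obtain B where "B > 0" and B: "\<forall>x\<in>D. \<forall>t\<ge>0. (norm (T t x))\<^sup>2 \<le> B * (norm x)\<^sup>2"
    using uniformly_bounded_on_domain by blast
  obtain C where "C \<ge> 0" and C: "\<forall>x. Re (Q x x) \<le> C * (norm x)\<^sup>2"
    using Re_Q_diagonal_bound by blast
  define t0 where "t0 = 4 * B * C + 1"
  have "t0 > 0" using \<open>B > 0\<close> \<open>C \<ge> 0\<close> by (simp add: t0_def add_nonneg_pos)
  have "norm (T t0 x) \<le> norm x / 2" if "x \<in> D" for x
  proof -
    have "(norm (T t0 x))\<^sup>2 / B \<le> (norm (T s x))\<^sup>2" if "s \<in> {0..<t0}" for s
    proof -
      have "T t0 x = T (t0 - s) (T s x)" using T_add[of "t0 - s" s x] that by simp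
      then have "(norm (T t0 x))\<^sup>2 \<le> B * (norm (T s x))\<^sup>2"
        using B T_maps_domain \<open>x \<in> D\<close> that by simp
      then show ?thesis using \<open>B > 0\<close> by (simp add: field_simps)
    qed
    then have "(norm (T t0 x))\<^sup>2 / B * (t0 - 0) \<le> Re (Q x x)"
      using \<open>t0 > 0\<close> \<open>x \<in> D\<close> by (intro energy_dissipation_bound) auto
    with C have "(norm (T t0 x))\<^sup>2 * t0 / B \<le> C * (norm x)\<^sup>2"
      by (metis diff_zero order_trans times_divide_eq_left)
    then have "(norm (T t0 x))\<^sup>2 * t0 \<le> B * C * (norm x)\<^sup>2"
      using \<open>B > 0\<close> by (simp add: pos_divide_le_eq ac_simps)
    also have "\<dots> \<le> (t0 / 4) * (norm x)\<^sup>2"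
      by (intro mult_right_mono) (auto simp: t0_def)
    finally have "(norm (T t0 x))\<^sup>2 * t0 \<le> (t0 / 4) * (norm x)\<^sup>2" .
    then have "(norm (T t0 x))\<^sup>2 \<le> (norm x / 2)\<^sup>2"
      using \<open>t0 > 0\<close> by (simp add: field_simps power2_eq_square)
    then show ?thesis by (rule power2_le_imp_le) simp
  qed
  with \<open>t0 > 0\<close> show ?thesis by blast
qed

lemma contraction: "\<exists>t0>0. \<forall>x. norm (T t0 x) \<le> 1 / 2 * norm x"
proof -
  obtain t0 where "t0 > 0" and t0: "\<forall>x\<in>D. norm (T t0 x) \<le> norm x / 2"
    using contraction_on_domain by blast
  have "closed {x. norm (T t0 x) \<le> norm x / 2}"
    using bounded_linear_T \<open>t0 > 0\<close>
    by (intro closed_Collect_le continuous_intros linear_continuous_on) auto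
  then have "closure D \<subseteq> {x. norm (T t0 x) \<le> norm x / 2}"
    using t0 by (intro closure_minimal) auto
  with \<open>t0 > 0\<close> show ?thesis using closure_domain by auto
qed

lemma exponentially_stable: "\<exists>M\<ge>1. \<exists>\<epsilon>>0. \<forall>t\<ge>0. onorm (T t) \<le> M * exp (- \<epsilon> * t)"
  using contraction exponentially_stable_if_contraction[of _ "1 / 2"] by auto

end

theorem mainTheorem2:
  fixes T :: "real \<Rightarrow> 'a::cbanach \<Rightarrow> 'a"
    and D :: "'a set" and A :: "'a \<Rightarrow> 'a"
    and Q :: "'a \<Rightarrow> 'a \<Rightarrow> complex"
  assumes "C0_semigroup T"
    and "is_generator T D A"
    and "positive_op Q"
    and "\<forall>x\<in>D. Q (A x) x + Q x (A x) \<le> - complex_of_real ((norm x)\<^sup>2)"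
  shows "\<exists>M \<ge> 1. \<exists>\<epsilon> > 0. \<forall>t\<ge>0. onorm (T t) \<le> M * exp (- \<epsilon> * t)"
proof -
  interpret lyapunov_stable T D A Q
    using assms by unfold_locales
  show ?thesis by (rule exponentially_stable)
qed

end
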